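(* Let $k\ge 2$ and let $p,q$ be real polynomials with $\deg p=k$, $\deg q=k-1$, whose roots are real, simple and strictly interlacing, $p_1<q_1<p_2<\dots<q_{k-1}<p_k$. Then every root $z$ of $W(p,q)=p'q-q'p$ satisfies $\left|z-\frac{p_1+p_k}{2}\right|\le\frac{p_k-p_1}{2}$.
   Context: Here $p_1<\dots<p_k$ are the roots of $p$ and $q_1<\dots<q_{k-1}$ the roots of $q$. *)

theory Defs
  imports Complex_Main "HOL-Computational_Algebra.Polynomial"
begin

end

theory Submission
  imports Defs
begin

(* Write p = a omega with omega = prod_j (X - p_j) and expand q in the Lagrange basis
   pi_i = prod_{j \<noteq> i} (X - p_j), so q = sum_i c_i pi_i.  Since omega' pi_i - pi_i' omega = pi_i^2,
   the Wronskian becomes W = a sum_i c_i pi_i^2, i.e. W(z) = a omega(z)^2 sum_i c_i / (z - p_i)^2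
   away from the roots of p.  Interlacing forces all c_i to have the sign of the leading
   coefficient of q.  Finally, for z outside the disk with diameter [p_1, p_k] each quotient
   (z - p_1)(z - p_k) / (z - p_i)^2 has positive real part, so the sum cannot vanish. *)

(* The monic polynomial with roots at the nodes x j, j \<in> S.  The polynomials
   node_poly x (S - {i}) form the Lagrange basis associated with these nodes. *)
definition node_poly :: "('b \<Rightarrow> 'a::comm_ring_1) \<Rightarrow> 'b set \<Rightarrow> 'a poly" where
  "node_poly x S = (\<Prod>j\<in>S. [:- x j, 1:])"

lemma poly_node_poly: "poly (node_poly x S) z = (\<Prod>j\<in>S. z - x j)"
  by (simp add: node_poly_def poly_prod)

lemma degree_node_poly:
  fixes x :: "'b \<Rightarrow> 'a::idom"
  shows "finite S \<Longrightarrow> degree (node_poly x S) = card S"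
  unfolding node_poly_def by (subst degree_prod_eq_sum_degree) auto

lemma lead_coeff_node_poly:
  fixes x :: "'b \<Rightarrow> 'a::idom"
  shows "lead_coeff (node_poly x S) = 1"
  by (simp add: node_poly_def lead_coeff_prod)

lemma node_poly_remove:
  "finite S \<Longrightarrow> i \<in> S \<Longrightarrow> node_poly x S = [:- x i, 1:] * node_poly x (S - {i})"
  unfolding node_poly_def by (rule prod.remove)

lemma eq_smult_node_poly:
  fixes f :: "'a::idom poly" and x :: "'b \<Rightarrow> 'a"
  assumes "finite S" "inj_on x S" "degree f = card S" "\<And>j. j \<in> S \<Longrightarrow> poly f (x j) = 0"
  shows "f = smult (lead_coeff f) (node_poly x S)"
proof (rule poly_eqI_degree_lead_coeff[where n = "card S" and A = "x ` S"])
  show "coeff f (card S) = coeff (smult (lead_coeff f) (node_poly x S)) (card S)"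
    using assms lead_coeff_node_poly[of x S] by (simp add: degree_node_poly)
  show "degree (smult (lead_coeff f) (node_poly x S)) \<le> card S"
    using assms(1) by (simp add: degree_node_poly)
  fix z assume "z \<in> x ` S"
  then show "poly f z = poly (smult (lead_coeff f) (node_poly x S)) z"
    using assms(1,4) by (auto simp: poly_node_poly prod_zero_iff)
qed (use assms in \<open>simp_all add: card_image\<close>)

lemma lagrange_interpolation:
  fixes f :: "'a::field poly" and x :: "'b \<Rightarrow> 'a"
  assumes "finite S" "inj_on x S" "degree f < card S"
  shows "f = (\<Sum>i\<in>S. smult (poly f (x i) / poly (node_poly x (S - {i})) (x i)) (node_poly x (S - {i})))"
    (is "f = ?L")
proof (rule poly_eqI_degree[where A = "x ` S"])
  have basis_nz: "poly (node_poly x (S - {i})) (x i) \<noteq> 0" if "i \<in> S" for i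
    using assms(1,2) that by (auto simp: poly_node_poly prod_zero_iff inj_on_eq_iff)
  have basis_vanish: "poly (node_poly x (S - {i})) (x m) = 0" if "m \<in> S - {i}" for i m
    using assms(1) that by (auto simp: poly_node_poly prod_zero_iff)
  fix z assume "z \<in> x ` S"
  then obtain m where m: "m \<in> S" "z = x m" by auto
  have "poly ?L z = (\<Sum>i\<in>S. poly f (x i) / poly (node_poly x (S - {i})) (x i) * poly (node_poly x (S - {i})) (x m))"
    using m by (simp add: poly_sum)
  also have "\<dots> = poly f (x m)"
    using m assms(1) basis_nz[OF m(1)]
    by (subst sum.remove[of _ m]) (auto intro!: sum.neutral basis_vanish)
  finally show "poly f z = poly ?L z" using m by simp
next
  have "degree ?L \<le> card S - 1"
    by (rule degree_sum_le)
       (use assms(1) in \<open>auto intro: order.trans[OF degree_smult_le] simp: degree_node_poly card_Diff_singleton\<close>)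
  then show "degree ?L < card (x ` S)"
    using assms by (simp add: card_image)
qed (use assms in \<open>simp add: card_image\<close>)

(* The Wronskian of the node polynomial omega with a basis polynomial pi_i: writing
   omega = (X - x_i) pi_i gives omega' pi_i - pi_i' omega = pi_i^2. *)
lemma wronskian_node_basis:
  fixes x :: "'b \<Rightarrow> 'a::idom"
  assumes "finite S" "i \<in> S"
  shows "pderiv (node_poly x S) * node_poly x (S - {i}) - pderiv (node_poly x (S - {i})) * node_poly x S
           = (node_poly x (S - {i}))\<^sup>2"
proof -
  define \<pi> where "\<pi> = node_poly x (S - {i})"
  define L where "L = [:- x i, 1:]"
  have split: "node_poly x S = L * \<pi>"
    unfolding \<pi>_def L_def using assms by (rule node_poly_remove)
  have "pderiv L = 1"
    by (simp add: L_def pderiv_pCons)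
  then have "pderiv (node_poly x S) = \<pi> + L * pderiv \<pi>"
    unfolding split by (simp add: pderiv_mult)
  then show ?thesis
    unfolding split \<pi>_def[symmetric] by (simp add: algebra_simps power2_eq_square)
qed

lemma pderiv_sum: "pderiv (\<Sum>i\<in>S. f i) = (\<Sum>i\<in>S. pderiv (f i))"
  by (induction S rule: infinite_finite_induct) (simp_all add: pderiv_add)

lemma smult_sum_right: "smult a (\<Sum>i\<in>S. f i) = (\<Sum>i\<in>S. smult a (f i))"
  by (induction S rule: infinite_finite_induct) (simp_all add: smult_add_right)

lemma wronskian_node_expansion:
  fixes x :: "'b \<Rightarrow> 'a::idom"
  assumes "finite S"
    and "p = smult a (node_poly x S)"
    and "q = (\<Sum>i\<in>S. smult (c i) (node_poly x (S - {i})))"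
  shows "pderiv p * q - pderiv q * p = smult a (\<Sum>i\<in>S. smult (c i) ((node_poly x (S - {i}))\<^sup>2))"
proof -
  have "pderiv p * q - pderiv q * p
      = (\<Sum>i\<in>S. smult (a * c i) (pderiv (node_poly x S) * node_poly x (S - {i})
                                     - pderiv (node_poly x (S - {i})) * node_poly x S))"
    unfolding assms(2,3)
    by (simp add: pderiv_sum pderiv_smult sum_distrib_left sum_distrib_right
        sum_subtractf[symmetric] smult_diff_right mult.commute mult.left_commute)
  also have "\<dots> = smult a (\<Sum>i\<in>S. smult (c i) ((node_poly x (S - {i}))\<^sup>2))"
    by (simp add: wronskian_node_basis assms(1) smult_sum_right)
  finally show ?thesis .
qed

lemma wronskian_partial_fractions:
  fixes p q :: "'a::field poly" and x :: "'b \<Rightarrow> 'a"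
  assumes "finite S" "inj_on x S" "p = smult a (node_poly x S)" "degree q < card S"
    and "\<And>j. j \<in> S \<Longrightarrow> z \<noteq> x j"
  shows "poly (pderiv p * q - pderiv q * p) z
           = a * (poly (node_poly x S) z)\<^sup>2
               * (\<Sum>i\<in>S. poly q (x i) / poly (node_poly x (S - {i})) (x i) / (z - x i)\<^sup>2)"
proof -
  define c where "c i = poly q (x i) / poly (node_poly x (S - {i})) (x i)" for i
  have q_expansion: "q = (\<Sum>i\<in>S. smult (c i) (node_poly x (S - {i})))"
    unfolding c_def using assms(1,2,4) by (rule lagrange_interpolation)
  have basis_at_z: "poly (node_poly x (S - {i})) z = poly (node_poly x S) z / (z - x i)" if "i \<in> S" for i
    using assms(5)[OF that] by (simp add: poly_node_poly prod.remove[OF assms(1) that])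
  have "poly (pderiv p * q - pderiv q * p) z = a * (\<Sum>i\<in>S. c i * (poly (node_poly x (S - {i})) z)\<^sup>2)"
    unfolding wronskian_node_expansion[OF assms(1,3) q_expansion] by (simp add: poly_sum)
  also have "\<dots> = a * (poly (node_poly x S) z)\<^sup>2 * (\<Sum>i\<in>S. c i / (z - x i)\<^sup>2)"
    by (simp add: basis_at_z sum_distrib_left power_divide mult_ac)
  finally show ?thesis unfolding c_def .
qed

lemma map_poly_of_real_diff:
  "map_poly (of_real :: real \<Rightarrow> 'a::real_algebra_1) (f - g) = map_poly of_real f - map_poly of_real g"
  by (rule poly_eqI) (simp add: coeff_map_poly)

lemma map_poly_of_real_mult:
  "map_poly (of_real :: real \<Rightarrow> 'a::{real_algebra_1,comm_ring_1}) (f * g) = map_poly of_real f * map_poly of_real g"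
  by (rule poly_eqI) (simp add: coeff_map_poly coeff_mult)

lemma map_poly_of_real_pderiv:
  "map_poly (of_real :: real \<Rightarrow> 'a::real_field) (pderiv f) = pderiv (map_poly of_real f)"
  by (rule poly_eqI) (simp add: coeff_map_poly coeff_pderiv)

lemma poly_map_poly_of_real:
  "poly (map_poly (of_real :: real \<Rightarrow> 'a::{real_algebra_1,comm_ring_1}) f) (of_real t) = of_real (poly f t)"
  by (simp add: poly_altdef degree_map_poly coeff_map_poly)

lemma wronskian_root_real_nodes:
  fixes p q :: "real poly" and P :: "'b \<Rightarrow> real" and z :: complex
  assumes "finite S" "inj_on P S" "p \<noteq> 0" "degree p = card S" "\<And>j. j \<in> S \<Longrightarrow> poly p (P j) = 0"
    and "degree q < card S" and "\<And>j. j \<in> S \<Longrightarrow> z \<noteq> of_real (P j)"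
    and "poly (map_poly of_real (pderiv p * q - pderiv q * p)) z = 0"
  shows "(\<Sum>i\<in>S. of_real (poly q (P i) / (\<Prod>j\<in>S - {i}. P i - P j)) / (z - of_real (P i))\<^sup>2) = 0"
proof -
  define x where "x j = (of_real (P j) :: complex)" for j
  define pc where "pc = map_poly (of_real :: real \<Rightarrow> complex) p"
  define qc where "qc = map_poly (of_real :: real \<Rightarrow> complex) q"
  have inj_x: "inj_on x S"
    using assms(2) by (auto simp: x_def inj_on_def)
  have pc_factor: "pc = smult (lead_coeff pc) (node_poly x S)"
    by (rule eq_smult_node_poly)
       (use assms(1,4,5) inj_x in \<open>simp_all add: pc_def x_def degree_map_poly poly_map_poly_of_real\<close>)
  have lc_nz: "lead_coeff pc \<noteq> 0"
    using assms(3) by (simp add: pc_def coeff_map_poly degree_map_poly)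
  have omega_nz: "poly (node_poly x S) z \<noteq> 0"
    using assms(1,7) by (auto simp: poly_node_poly x_def)
  have "0 = poly (pderiv pc * qc - pderiv qc * pc) z"
    using assms(8) by (simp add: pc_def qc_def map_poly_of_real_diff map_poly_of_real_mult map_poly_of_real_pderiv)
  also have "\<dots> = lead_coeff pc * (poly (node_poly x S) z)\<^sup>2
               * (\<Sum>i\<in>S. poly qc (x i) / poly (node_poly x (S - {i})) (x i) / (z - x i)\<^sup>2)"
    by (rule wronskian_partial_fractions[OF assms(1) inj_x pc_factor])
       (use assms(6,7) in \<open>simp_all add: qc_def x_def degree_map_poly\<close>)
  finally have "(\<Sum>i\<in>S. poly qc (x i) / poly (node_poly x (S - {i})) (x i) / (z - x i)\<^sup>2) = 0"
    using lc_nz omega_nz by simp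
  then show ?thesis
    by (simp add: qc_def x_def poly_map_poly_of_real poly_node_poly)
qed

(* Thales: Re ((z - B) * cnj (z - A)) measures how far z lies outside the circle with
   diameter [A, B]; it is positive exactly when the angle AzB is acute. *)
lemma Re_mult_cnj_diameter:
  fixes z :: complex and A B :: real
  shows "Re ((z - of_real B) * cnj (z - of_real A)) = (cmod (z - of_real ((A + B) / 2)))\<^sup>2 - ((B - A) / 2)\<^sup>2"
proof -
  have "(cmod (z - of_real ((A + B) / 2)))\<^sup>2 = (Re z - (A + B) / 2)\<^sup>2 + (Im z)\<^sup>2"
    by (simp add: cmod_power2)
  then show ?thesis
    by (simp add: power2_eq_square field_simps)
qed

lemma Re_square_combination:
  fixes a b :: complex and l m :: real
  shows "Re ((of_real l * a + of_real m * b)\<^sup>2 * cnj (a * b))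
           = (l\<^sup>2 * (cmod a)\<^sup>2 + m\<^sup>2 * (cmod b)\<^sup>2) * Re (a * cnj b) + 2 * l * m * (cmod a)\<^sup>2 * (cmod b)\<^sup>2"
proof -
  have aa: "a * cnj a = of_real ((cmod a)\<^sup>2)" and bb: "b * cnj b = of_real ((cmod b)\<^sup>2)"
    using complex_norm_square[of a] complex_norm_square[of b] by simp_all
  have "(of_real l * a + of_real m * b)\<^sup>2 * cnj (a * b)
      = of_real (l\<^sup>2) * (a * cnj a) * (a * cnj b) + 2 * of_real l * of_real m * (a * cnj a) * (b * cnj b)
        + of_real (m\<^sup>2) * (b * cnj b) * cnj (a * cnj b)"
    by (simp add: power2_eq_square algebra_simps)
  then show ?thesis
    by (simp add: aa bb algebra_simps)
qed

(* Write z - t = l (z - B) + m (z - A) with l, m \<ge> 0, l + m = 1 and use the two facts above. *)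
lemma outside_disk_Re_pos:
  fixes z :: complex and A B t :: real
  assumes "A < B" "A \<le> t" "t \<le> B" "cmod (z - of_real ((A + B) / 2)) > (B - A) / 2"
  shows "Re ((z - of_real A) * (z - of_real B) / (z - of_real t)\<^sup>2) > 0"
proof -
  define a b where "a = z - of_real B" and "b = z - of_real A"
  define l m where "l = (t - A) / (B - A)" and "m = (B - t) / (B - A)"
  have lm: "l \<ge> 0" "m \<ge> 0" "l + m = 1"
    using assms(1-3) by (auto simp: l_def m_def simp flip: add_divide_distrib)
  have z_t: "z - of_real t = of_real l * a + of_real m * b"
  proof -
    have "l * B + m * A = ((t - A) * B + (B - t) * A) / (B - A)"
      by (simp add: l_def m_def add_divide_distrib)
    also have "\<dots> = t * (B - A) / (B - A)"
      by (simp add: algebra_simps)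
    finally have "l * B + m * A = t"
      using assms(1) by simp
    moreover have "of_real l * a + of_real m * b = of_real (l + m) * z - of_real (l * B + m * A)"
      unfolding a_def b_def by (simp add: algebra_simps)
    ultimately show ?thesis
      using lm(3) by simp
  qed
  have acute: "Re (a * cnj b) > 0"
  proof -
    have "((B - A) / 2)\<^sup>2 < (cmod (z - of_real ((A + B) / 2)))\<^sup>2"
      using assms by (intro power_strict_mono) auto
    then show ?thesis
      unfolding a_def b_def Re_mult_cnj_diameter by simp
  qed
  have "a \<noteq> 0" "b \<noteq> 0"
    using acute by auto
  then have "l\<^sup>2 * (cmod a)\<^sup>2 + m\<^sup>2 * (cmod b)\<^sup>2 > 0"
    using lm by (cases "l = 0") (auto intro: add_pos_nonneg)
  then have "Re ((z - of_real t)\<^sup>2 * cnj (a * b)) > 0"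
    unfolding z_t Re_square_combination using lm acute by (simp add: add_pos_nonneg)
  moreover have "(z - of_real A) * (z - of_real B) * cnj ((z - of_real t)\<^sup>2)
      = cnj ((z - of_real t)\<^sup>2 * cnj (a * b))"
    by (simp add: a_def b_def mult.commute)
  ultimately show ?thesis
    unfolding Re_complex_div_gt_0 by (simp only: cnj.sel(1))
qed

lemma segment_in_diameter_disk:
  fixes A B t :: real
  assumes "A \<le> t" "t \<le> B"
  shows "cmod (of_real t - of_real ((A + B) / 2)) \<le> (B - A) / 2"
proof -
  have "cmod (of_real t - of_real ((A + B) / 2)) = \<bar>t - (A + B) / 2\<bar>"
    by (simp only: norm_of_real flip: of_real_diff)
  also have "\<dots> \<le> (B - A) / 2"
    using assms by (simp add: abs_le_iff field_simps)
  finally show ?thesis .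
qed

(* Consequently a sum sum_i w_i / (z - t_i)^2 with nodes t_i \<in> [A, B] and weights of one
   common strict sign cannot vanish at z outside the disk: multiplied by (z - A)(z - B)
   every term has positive real part. *)
lemma weighted_inverse_squares_nonzero:
  fixes z :: complex and w t :: "'b \<Rightarrow> real" and A B s :: real
  assumes "finite S" "S \<noteq> {}" "A < B"
    and "\<And>i. i \<in> S \<Longrightarrow> 0 < s * w i" "\<And>i. i \<in> S \<Longrightarrow> A \<le> t i \<and> t i \<le> B"
    and "cmod (z - of_real ((A + B) / 2)) > (B - A) / 2"
  shows "(\<Sum>i\<in>S. of_real (w i) / (z - of_real (t i))\<^sup>2) \<noteq> 0"
proof
  define D where "D = (z - of_real A) * (z - of_real B)"
  assume "(\<Sum>i\<in>S. of_real (w i) / (z - of_real (t i))\<^sup>2) = 0"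
  then have "0 = of_real s * D * (\<Sum>i\<in>S. of_real (w i) / (z - of_real (t i))\<^sup>2)"
    by simp
  also have "\<dots> = (\<Sum>i\<in>S. of_real (s * w i) * (D / (z - of_real (t i))\<^sup>2))"
    by (simp add: sum_distrib_left mult_ac)
  finally have "Re (\<Sum>i\<in>S. of_real (s * w i) * (D / (z - of_real (t i))\<^sup>2)) = 0"
    by simp
  moreover have "Re (\<Sum>i\<in>S. of_real (s * w i) * (D / (z - of_real (t i))\<^sup>2)) > 0"
    unfolding Re_sum
  proof (rule sum_pos)
    fix i assume "i \<in> S"
    then have "0 < s * w i * Re (D / (z - of_real (t i))\<^sup>2)"
      using assms(3-6) outside_disk_Re_pos[of A B "t i" z] unfolding D_def by (simp only: mult_pos_pos)
    then show "0 < Re (of_real (s * w i) * (D / (z - of_real (t i))\<^sup>2))"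
      by (simp only: times_complex.sel(1) Re_complex_of_real Im_complex_of_real mult_zero_left diff_0_right)
  qed (use assms(1,2) in auto)
  ultimately show False
    by simp
qed

lemma strict_mono_on_from_steps:
  fixes f :: "nat \<Rightarrow> 'a::order"
  assumes "\<And>i. m \<le> i \<Longrightarrow> i < n \<Longrightarrow> f i < f (Suc i)"
  shows "strict_mono_on {m..n} f"
proof (rule strict_mono_onI)
  fix r s assume "r \<in> {m..n}" "s \<in> {m..n}" "r < s"
  then have "m \<le> r" "Suc r \<le> s" "s \<le> n" by auto
  from \<open>Suc r \<le> s\<close> \<open>s \<le> n\<close> show "f r < f s"
  proof (induction s rule: dec_induct)
    case base
    then show ?case using assms \<open>m \<le> r\<close> by simp
  next
    case (step s)
    then have "f r < f s" by simp
    also have "f s < f (Suc s)" using assms step.prems \<open>m \<le> r\<close> step.hyps by simp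
    finally show ?case .
  qed
qed

definition interlacing :: "nat \<Rightarrow> (nat \<Rightarrow> real) \<Rightarrow> (nat \<Rightarrow> real) \<Rightarrow> bool" where
  "interlacing k P Q \<longleftrightarrow> (\<forall>i. 1 \<le> i \<longrightarrow> i \<le> k - 1 \<longrightarrow> P i < Q i \<and> Q i < P (i + 1))"

lemma interlacing_strict_mono:
  assumes "interlacing k P Q"
  shows "strict_mono_on {1..k} P" and "strict_mono_on {1..k - 1} Q"
proof -
  show "strict_mono_on {1..k} P"
    by (rule strict_mono_on_from_steps) (use assms in \<open>force simp: interlacing_def\<close>)
  show "strict_mono_on {1..k - 1} Q"
  proof (rule strict_mono_on_from_steps)
    fix i assume "1 \<le> i" "i < k - 1"
    then have "Q i < P (Suc i)" "P (Suc i) < Q (Suc i)"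
      using assms by (auto simp: interlacing_def)
    then show "Q i < Q (Suc i)" by simp
  qed
qed

(* Sign count at a root p_i: q_j and p_j with j < i lie to the left of p_i, and q_j,
   p_{j+1} with j \<ge> i lie to its right, so the two products below have equal sign. *)
lemma interlacing_products_pos:
  assumes "interlacing k P Q" "i \<in> {1..k}"
  shows "0 < (\<Prod>j\<in>{1..k - 1}. P i - Q j) / (\<Prod>j\<in>{1..k} - {i}. P i - P j)"
proof -
  have i: "1 \<le> i" "i \<le> k" using assms(2) by auto
  have P_less: "P r < P s" if "1 \<le> r" "r < s" "s \<le> k" for r s
    using strict_mono_onD[OF interlacing_strict_mono(1)[OF assms(1)]] that by auto
  have P_le: "P r \<le> P s" if "1 \<le> r" "r \<le> s" "s \<le> k" for r s
    using P_less[of r s] that by (cases "r = s") auto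
  have PQ: "P j < Q j" "Q j < P (Suc j)" if "1 \<le> j" "j \<le> k - 1" for j
    using assms(1) that by (auto simp: interlacing_def)
  have nodes: "{1..k} - {i} = {1..<i} \<union> Suc ` {i..k - 1}"
    using i by (auto simp: image_iff)
  have roots: "{1..k - 1} = {1..<i} \<union> {i..k - 1}"
    using i by auto
  have num: "(\<Prod>j\<in>{1..k - 1}. P i - Q j) = (\<Prod>j\<in>{1..<i}. P i - Q j) * (\<Prod>j\<in>{i..k - 1}. P i - Q j)"
    unfolding roots by (rule prod.union_disjoint) auto
  have den: "(\<Prod>j\<in>{1..k} - {i}. P i - P j) = (\<Prod>j\<in>{1..<i}. P i - P j) * (\<Prod>j\<in>{i..k - 1}. P i - P (Suc j))"
  proof -
    have "(\<Prod>j\<in>Suc ` {i..k - 1}. P i - P j) = (\<Prod>j\<in>{i..k - 1}. P i - P (Suc j))"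
      by (rule prod.reindex_cong[where l = Suc]) auto
    then show ?thesis
      unfolding nodes by (subst prod.union_disjoint) auto
  qed
  have "(\<Prod>j\<in>{1..k - 1}. P i - Q j) / (\<Prod>j\<in>{1..k} - {i}. P i - P j)
      = (\<Prod>j\<in>{1..<i}. (P i - Q j) / (P i - P j)) * (\<Prod>j\<in>{i..k - 1}. (P i - Q j) / (P i - P (Suc j)))"
    unfolding num den prod_dividef by simp
  also have "\<dots> > 0"
  proof (intro mult_pos_pos prod_pos)
    fix j assume j: "j \<in> {1..<i}"
    have "P j < P i"
      using i j P_less[of j i] by auto
    moreover have "Q j < P (Suc j)" "P (Suc j) \<le> P i"
      using i j PQ(2)[of j] P_le[of "Suc j" i] by auto
    ultimately have "P j < P i" "Q j < P i"
      by auto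
    then show "0 < (P i - Q j) / (P i - P j)" by simp
  next
    fix j assume j: "j \<in> {i..k - 1}"
    have "P i \<le> P j" "P j < Q j"
      using i j P_le[of i j] PQ(1)[of j] by auto
    moreover have "P i < P (Suc j)"
      using i j P_less[of i "Suc j"] by auto
    ultimately have "P i < Q j" "P i < P (Suc j)"
      by auto
    then show "0 < (P i - Q j) / (P i - P (Suc j))"
      by (simp add: divide_neg_neg)
  qed
  finally show ?thesis .
qed

lemma interlacing_lagrange_weights_pos:
  fixes q :: "real poly"
  assumes "interlacing k P Q" "q \<noteq> 0" "degree q = k - 1"
    and "\<And>j. j \<in> {1..k - 1} \<Longrightarrow> poly q (Q j) = 0" and "i \<in> {1..k}"
  shows "0 < lead_coeff q * (poly q (P i) / (\<Prod>j\<in>{1..k} - {i}. P i - P j))"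
proof -
  have "q = smult (lead_coeff q) (node_poly Q {1..k - 1})"
    using strict_mono_on_imp_inj_on[OF interlacing_strict_mono(2)[OF assms(1)]] assms(3,4)
    by (intro eq_smult_node_poly) auto
  then have "poly q (P i) = lead_coeff q * (\<Prod>j\<in>{1..k - 1}. P i - Q j)"
    by (metis poly_node_poly poly_smult)
  then have "lead_coeff q * (poly q (P i) / (\<Prod>j\<in>{1..k} - {i}. P i - P j))
      = (lead_coeff q)\<^sup>2 * ((\<Prod>j\<in>{1..k - 1}. P i - Q j) / (\<Prod>j\<in>{1..k} - {i}. P i - P j))"
    by (simp add: power2_eq_square)
  also have "\<dots> > 0"
    using interlacing_products_pos[OF assms(1,5)] assms(2) by (intro mult_pos_pos) simp_all
  finally show ?thesis .
qed

(* For z outside the disk, z is not a root of p, so by the partial fraction form a root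
   of W would make a one-signed weighted sum of inverse squares vanish. *)
theorem lemma1:
  fixes p q :: "real poly" and k :: nat and P Q :: "nat \<Rightarrow> real"
  assumes "k \<ge> 2"
    and "degree p = k" and "degree q = k - 1"
    and "{x. poly p x = 0} = P ` {1..k}"
    and "{x. poly q x = 0} = Q ` {1..k-1}"
    and "\<And>i. i \<in> {1..k} \<Longrightarrow> order (P i) p = 1"
    and "\<And>i. i \<in> {1..k-1} \<Longrightarrow> order (Q i) q = 1"
    and "\<And>i. 1 \<le> i \<Longrightarrow> i \<le> k - 1 \<Longrightarrow> P i < Q i \<and> Q i < P (i + 1)"
  shows "\<forall>z::complex. poly (map_poly complex_of_real (pderiv p * q - pderiv q * p)) z = 0
           \<longrightarrow> cmod (z - complex_of_real ((P 1 + P k) / 2)) \<le> (P k - P 1) / 2"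
proof (intro allI impI)
  fix z :: complex
  assume root: "poly (map_poly complex_of_real (pderiv p * q - pderiv q * p)) z = 0"
  have inter: "interlacing k P Q"
    using assms(8) by (simp add: interlacing_def)
  have mono: "strict_mono_on {1..k} P"
    by (rule interlacing_strict_mono(1)[OF inter])
  have P_range: "P 1 \<le> P i \<and> P i \<le> P k" if "i \<in> {1..k}" for i
    using that assms(1) strict_mono_on_less_eq[OF mono] by auto
  have "P 1 < P k"
    using strict_mono_onD[OF mono] assms(1) by simp
  have q_nz: "q \<noteq> 0"
    using assms(1,3) by auto
  have q_roots: "poly q (Q j) = 0" if "j \<in> {1..k - 1}" for j
    using assms(5) that by auto
  show "cmod (z - complex_of_real ((P 1 + P k) / 2)) \<le> (P k - P 1) / 2"
  proof (rule ccontr)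
    assume "\<not> ?thesis"
    then have outside: "cmod (z - complex_of_real ((P 1 + P k) / 2)) > (P k - P 1) / 2"
      by simp
    have z_not_node: "z \<noteq> of_real (P i)" if "i \<in> {1..k}" for i
      using segment_in_diameter_disk[of "P 1" "P i" "P k"] P_range[OF that] outside by auto
    have "(\<Sum>i\<in>{1..k}. of_real (poly q (P i) / (\<Prod>j\<in>{1..k} - {i}. P i - P j)) / (z - of_real (P i))\<^sup>2) = 0"
      by (rule wronskian_root_real_nodes[OF _ _ _ _ _ _ z_not_node root])
         (use assms(1-4) strict_mono_on_imp_inj_on[OF mono] in auto)
    moreover have "(\<Sum>i\<in>{1..k}. of_real (poly q (P i) / (\<Prod>j\<in>{1..k} - {i}. P i - P j)) / (z - of_real (P i))\<^sup>2) \<noteq> 0"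
      by (rule weighted_inverse_squares_nonzero[OF _ _ \<open>P 1 < P k\<close> _ P_range outside])
         (use assms(1) interlacing_lagrange_weights_pos[OF inter q_nz assms(3) q_roots] in auto)
    ultimately show False by simp
  qed
qed

end
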